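(* Let $\mathfrak S=(S,\xrightarrow{F},\le)$ be a functional WSTS. Then its completion $\widehat{\mathfrak S}$ is a (complete, functional) WSTS if and only if $(S,\le)$ is $\omega^2$-wqo.
   Context: A functional WSTS $(S,\xrightarrow{F},\le)$: $(S,\le)$ is a well partial order (well-founded, no infinite antichain), and $F$ is a finite set of partial monotonic maps $f:S\rightharpoonup S$ (domain upward-closed, $f$ monotone on its domain); transitions are $s\to f(s)$. A WSTS is a monotonic ordered transition system whose order is a well (quasi-)order; a complete functional WSTS is one whose state space is a continuous dcpo which is well-ordered, with partial continuous maps (Scott-open domain, preserving lubs of directed subsets of the domain). Completion: an ideal of $S$ is a nonempty downward-closed directed subset; $\widehat S=\mathrm{Idl}(S)$ ordered by inclusion; for $f\in F$, $\widehat f$ has domain $\{C\in\widehat S\mid C\cap\operatorname{dom}f\neq\emptyset\}$ and $\widehat f(C)=\downarrow f\langle C\cap\operatorname{dom} f\rangle$; $\widehat{\mathfrak S}=(\widehat S,\xrightarrow{\{\widehat f\mid f\in F\}},\subseteq)$. Rado's structure: $X_{\mathrm{Rado}}=\{(m,n)\in\mathbb N^2\mid m<n\}$ with $(m,n)\le(m',n')$ iff ($m=m'$ and $n\le n'$) or $n<m'$. A wqo is $\omega^2$-wqo if it contains no subset order-isomorphic (with the induced order) to $X_{\mathrm{Rado}}$. *)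

theory Defs
  imports Main
begin

definition partial_order_on :: "'a set \<Rightarrow> ('a \<Rightarrow> 'a \<Rightarrow> bool) \<Rightarrow> bool" where
  "partial_order_on S le \<longleftrightarrow>
     (\<forall>x\<in>S. le x x) \<and>
     (\<forall>x\<in>S. \<forall>y\<in>S. le x y \<and> le y x \<longrightarrow> x = y) \<and>
     (\<forall>x\<in>S. \<forall>y\<in>S. \<forall>z\<in>S. le x y \<and> le y z \<longrightarrow> le x z)"

definition antichain_on :: "'a set \<Rightarrow> ('a \<Rightarrow> 'a \<Rightarrow> bool) \<Rightarrow> 'a set \<Rightarrow> bool" where
  "antichain_on S le A \<longleftrightarrow> A \<subseteq> S \<and> (\<forall>x\<in>A. \<forall>y\<in>A. x \<noteq> y \<longrightarrow> \<not> le x y \<and> \<not> le y x)"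

definition wpo_on :: "'a set \<Rightarrow> ('a \<Rightarrow> 'a \<Rightarrow> bool) \<Rightarrow> bool" where
  "wpo_on S le \<longleftrightarrow> partial_order_on S le \<and>
     wfp_on S (\<lambda>x y. le x y \<and> x \<noteq> y) \<and>
     (\<forall>A. antichain_on S le A \<longrightarrow> finite A)"

definition pdom :: "'a set \<Rightarrow> ('a \<Rightarrow> 'b option) \<Rightarrow> 'a set" where
  "pdom S f = {x\<in>S. f x \<noteq> None}"

definition functional_WSTS :: "'a set \<Rightarrow> ('a \<Rightarrow> 'a \<Rightarrow> bool) \<Rightarrow> ('a \<Rightarrow> 'a option) set \<Rightarrow> bool" where
  "functional_WSTS S le F \<longleftrightarrow> wpo_on S le \<and> finite F \<and>
     (\<forall>f\<in>F. (\<forall>x\<in>pdom S f. the (f x) \<in> S) \<and>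
            (\<forall>x\<in>pdom S f. \<forall>y\<in>S. le x y \<longrightarrow> y \<in> pdom S f) \<and>
            (\<forall>x\<in>pdom S f. \<forall>y\<in>pdom S f. le x y \<longrightarrow> le (the (f x)) (the (f y))))"

definition directed_on :: "'a set \<Rightarrow> ('a \<Rightarrow> 'a \<Rightarrow> bool) \<Rightarrow> 'a set \<Rightarrow> bool" where
  "directed_on S le D \<longleftrightarrow> D \<subseteq> S \<and> D \<noteq> {} \<and> (\<forall>x\<in>D. \<forall>y\<in>D. \<exists>z\<in>D. le x z \<and> le y z)"

definition is_lub :: "'a set \<Rightarrow> ('a \<Rightarrow> 'a \<Rightarrow> bool) \<Rightarrow> 'a set \<Rightarrow> 'a \<Rightarrow> bool" where
  "is_lub S le D d \<longleftrightarrow> d \<in> S \<and> (\<forall>x\<in>D. le x d) \<and> (\<forall>u\<in>S. (\<forall>x\<in>D. le x u) \<longrightarrow> le d u)"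

definition dcpo_on :: "'a set \<Rightarrow> ('a \<Rightarrow> 'a \<Rightarrow> bool) \<Rightarrow> bool" where
  "dcpo_on S le \<longleftrightarrow> partial_order_on S le \<and> (\<forall>D. directed_on S le D \<longrightarrow> (\<exists>d. is_lub S le D d))"

definition way_below :: "'a set \<Rightarrow> ('a \<Rightarrow> 'a \<Rightarrow> bool) \<Rightarrow> 'a \<Rightarrow> 'a \<Rightarrow> bool" where
  "way_below S le x y \<longleftrightarrow>
     (\<forall>D d. directed_on S le D \<and> is_lub S le D d \<and> le y d \<longrightarrow> (\<exists>e\<in>D. le x e))"

definition continuous_dcpo_on :: "'a set \<Rightarrow> ('a \<Rightarrow> 'a \<Rightarrow> bool) \<Rightarrow> bool" where
  "continuous_dcpo_on S le \<longleftrightarrow> dcpo_on S le \<and>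
     (\<forall>x\<in>S. directed_on S le {y\<in>S. way_below S le y x} \<and> is_lub S le {y\<in>S. way_below S le y x} x)"

definition scott_open_on :: "'a set \<Rightarrow> ('a \<Rightarrow> 'a \<Rightarrow> bool) \<Rightarrow> 'a set \<Rightarrow> bool" where
  "scott_open_on S le U \<longleftrightarrow> U \<subseteq> S \<and> (\<forall>x\<in>U. \<forall>y\<in>S. le x y \<longrightarrow> y \<in> U) \<and>
     (\<forall>D d. directed_on S le D \<and> is_lub S le D d \<and> d \<in> U \<longrightarrow> D \<inter> U \<noteq> {})"

definition partial_continuous_on :: "'a set \<Rightarrow> ('a \<Rightarrow> 'a \<Rightarrow> bool) \<Rightarrow> ('a \<Rightarrow> 'a option) \<Rightarrow> bool" where
  "partial_continuous_on S le f \<longleftrightarrow> scott_open_on S le (pdom S f) \<and>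
     (\<forall>D d. directed_on S le D \<and> D \<subseteq> pdom S f \<and> is_lub S le D d \<longrightarrow>
        is_lub S le ((\<lambda>x. the (f x)) ` D) (the (f d)))"

definition complete_functional_WSTS :: "'a set \<Rightarrow> ('a \<Rightarrow> 'a \<Rightarrow> bool) \<Rightarrow> ('a \<Rightarrow> 'a option) set \<Rightarrow> bool" where
  "complete_functional_WSTS S le F \<longleftrightarrow> functional_WSTS S le F \<and> continuous_dcpo_on S le \<and>
     (\<forall>f\<in>F. partial_continuous_on S le f)"

definition ideal_on :: "'a set \<Rightarrow> ('a \<Rightarrow> 'a \<Rightarrow> bool) \<Rightarrow> 'a set \<Rightarrow> bool" where
  "ideal_on S le I \<longleftrightarrow> directed_on S le I \<and> (\<forall>x\<in>I. \<forall>y\<in>S. le y x \<longrightarrow> y \<in> I)"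

definition Idl :: "'a set \<Rightarrow> ('a \<Rightarrow> 'a \<Rightarrow> bool) \<Rightarrow> 'a set set" where
  "Idl S le = {I. ideal_on S le I}"

definition hat_map :: "'a set \<Rightarrow> ('a \<Rightarrow> 'a \<Rightarrow> bool) \<Rightarrow> ('a \<Rightarrow> 'a option) \<Rightarrow> 'a set \<Rightarrow> 'a set option" where
  "hat_map S le f C =
     (if C \<in> Idl S le \<and> C \<inter> pdom S f \<noteq> {}
      then Some {y\<in>S. \<exists>x\<in>C \<inter> pdom S f. le y (the (f x))}
      else None)"

definition completion_maps :: "'a set \<Rightarrow> ('a \<Rightarrow> 'a \<Rightarrow> bool) \<Rightarrow> ('a \<Rightarrow> 'a option) set \<Rightarrow> ('a set \<Rightarrow> 'a set option) set" where
  "completion_maps S le F = hat_map S le ` F"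

definition X_Rado :: "(nat \<times> nat) set" where
  "X_Rado = {(m, n). m < n}"

definition rado_le :: "nat \<times> nat \<Rightarrow> nat \<times> nat \<Rightarrow> bool" where
  "rado_le p q \<longleftrightarrow> (fst p = fst q \<and> snd p \<le> snd q) \<or> snd p < fst q"

definition contains_Rado :: "'a set \<Rightarrow> ('a \<Rightarrow> 'a \<Rightarrow> bool) \<Rightarrow> bool" where
  "contains_Rado S le \<longleftrightarrow> (\<exists>g. inj_on g X_Rado \<and> g ` X_Rado \<subseteq> S \<and>
     (\<forall>p\<in>X_Rado. \<forall>q\<in>X_Rado. rado_le p q \<longleftrightarrow> le (g p) (g q)))"

definition omega2_wqo :: "'a set \<Rightarrow> ('a \<Rightarrow> 'a \<Rightarrow> bool) \<Rightarrow> bool" where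
  "omega2_wqo S le \<longleftrightarrow> wpo_on S le \<and> \<not> contains_Rado S le"

end

theory Submission
  imports Defs "HOL-Library.Ramsey"
begin

text \<open>
  Ideals of a wpo are well-founded under inclusion (a strictly descending chain of ideals
  yields a bad sequence), directed unions make them a continuous dcpo with the principal
  ideals as basis, and the completed maps are monotone and Scott-continuous. So everything
  hinges on whether the ideals have an infinite antichain.
  The columns \<open>{(m, n) | n > m}\<close> of Rado's structure generate pairwise incomparable ideals.
  Conversely, from an infinite antichain of ideals \<open>I m\<close> one picks increasing chains
  \<open>H m n\<close> in \<open>I m\<close> escaping every \<open>I k\<close> with \<open>k \<le> n\<close>, \<open>k \<noteq> m\<close>; Ramsey's theorem
  for quadruples, together with the absence of bad sequences, makes \<open>(m, n) \<mapsto> H m n\<close>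
  along a subsequence an embedding of Rado's structure.
\<close>

section \<open>Ramsey arguments in well partial orders\<close>

lemma partial_order_on_refl: "partial_order_on S le \<Longrightarrow> x \<in> S \<Longrightarrow> le x x"
  by (simp add: partial_order_on_def)

lemma partial_order_on_trans:
  "partial_order_on S le \<Longrightarrow> x \<in> S \<Longrightarrow> y \<in> S \<Longrightarrow> z \<in> S \<Longrightarrow> le x y \<Longrightarrow> le y z \<Longrightarrow> le x z"
  unfolding partial_order_on_def by blast

lemma wfp_on_iff_no_infinite_down_chain:
  "wfp_on A R \<longleftrightarrow> (\<nexists>f. \<forall>i. f i \<in> A \<and> R (f (Suc i)) (f i))"
  unfolding wfp_on_iff_wfp[of A R] wfp_def wf_iff_no_infinite_down_chain by blast

lemma ramsey_strict_mono:
  fixes Q :: "nat list \<Rightarrow> bool"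
  obtains e :: "nat \<Rightarrow> nat" and b where "strict_mono e"
    and "\<And>xs. sorted_wrt (<) xs \<Longrightarrow> length xs = r \<Longrightarrow> Q (map e xs) = b"
proof -
  define col where "col X = (if Q (sorted_list_of_set X) then 1 else 0 :: nat)" for X
  have "\<forall>X. X \<subseteq> UNIV \<and> finite X \<and> card X = r \<longrightarrow> col X < 2"
    by (simp add: col_def)
  then obtain Y t where Y: "infinite Y"
    and hom: "\<forall>X. X \<subseteq> Y \<and> finite X \<and> card X = r \<longrightarrow> col X = t"
    using Ramsey[of "UNIV :: nat set" r col 2] by blast
  define e where "e = enumerate Y"
  have e: "strict_mono e"
    using Y by (simp add: e_def strict_mono_enumerate)
  have "Q (map e xs) = (t = 1)" if xs: "sorted_wrt (<) xs" "length xs = r" for xs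
  proof -
    have "sorted_wrt (\<lambda>i j. e i < e j) xs"
      by (rule sorted_wrt_mono_rel[OF _ xs(1)]) (simp add: strict_mono_less[OF e])
    then have sorted: "sorted_wrt (<) (map e xs)"
      by (simp add: sorted_wrt_map)
    have card: "card (set (map e xs)) = r"
      using sorted xs(2) by (metis distinct_card length_map strict_sorted_iff)
    have "sorted_list_of_set (set (map e xs)) = map e xs"
      using sorted card xs(2) by (simp add: sorted_list_of_set_unique[symmetric] del: set_map)
    moreover have "set (map e xs) \<subseteq> Y"
      using Y by (auto simp: e_def enumerate_in_set)
    then have "col (set (map e xs)) = t"
      using hom card by simp
    ultimately show ?thesis
      by (auto simp: col_def split: if_splits)
  qed
  then show thesis
    by (rule that[OF e])
qed

lemma ramsey_pairs:
  fixes P :: "nat \<Rightarrow> nat \<Rightarrow> bool"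
  obtains e :: "nat \<Rightarrow> nat" and b where "strict_mono e" and "\<And>i j. i < j \<Longrightarrow> P (e i) (e j) = b"
proof (rule ramsey_strict_mono[where Q = "\<lambda>xs. P (xs ! 0) (xs ! 1)" and r = 2])
  fix e :: "nat \<Rightarrow> nat" and b
  assume e: "strict_mono e"
    and hom: "\<And>xs. sorted_wrt (<) xs \<Longrightarrow> length xs = 2 \<Longrightarrow> P (map e xs ! 0) (map e xs ! 1) = b"
  show thesis
  proof (rule that[OF e])
    fix i j :: nat
    assume "i < j"
    then show "P (e i) (e j) = b"
      using hom[of "[i, j]"] by simp
  qed
qed

lemma ramsey_quadruples:
  fixes Q :: "nat \<Rightarrow> nat \<Rightarrow> nat \<Rightarrow> nat \<Rightarrow> bool"
  obtains e :: "nat \<Rightarrow> nat" and b where "strict_mono e"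
    and "\<And>i j k l. i < j \<Longrightarrow> j < k \<Longrightarrow> k < l \<Longrightarrow> Q (e i) (e j) (e k) (e l) = b"
proof (rule ramsey_strict_mono[where Q = "\<lambda>xs. Q (xs ! 0) (xs ! 1) (xs ! 2) (xs ! 3)" and r = 4])
  fix e :: "nat \<Rightarrow> nat" and b
  assume e: "strict_mono e" and hom: "\<And>xs. sorted_wrt (<) xs \<Longrightarrow> length xs = 4
    \<Longrightarrow> Q (map e xs ! 0) (map e xs ! 1) (map e xs ! 2) (map e xs ! 3) = b"
  show thesis
  proof (rule that[OF e])
    fix i j k l :: nat
    assume "i < j" "j < k" "k < l"
    then show "Q (e i) (e j) (e k) (e l) = b"
      using hom[of "[i, j, k, l]"] by (simp add: numeral_eq_Suc)
  qed
qed

lemma infinite_antichain_on_range: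
  fixes f :: "nat \<Rightarrow> 'a"
  assumes po: "partial_order_on S le" and f: "\<And>i. f i \<in> S"
    and incomparable: "\<And>i j. i \<noteq> j \<Longrightarrow> \<not> le (f i) (f j)"
  shows "antichain_on S le (range f)" and "infinite (range f)"
proof -
  show "antichain_on S le (range f)"
    unfolding antichain_on_def using f incomparable by (auto simp: image_iff) metis+
  have "inj f"
    using incomparable partial_order_on_refl[OF po f] by (metis injI)
  then show "infinite (range f)"
    by (rule range_inj_infinite)
qed

lemma wpo_on_good:
  fixes x :: "nat \<Rightarrow> 'a"
  assumes wpo: "wpo_on S le" and x: "\<And>i. x i \<in> S"
  shows "\<exists>i j. i < j \<and> le (x i) (x j)"
proof (rule ccontr)
  assume bad: "\<not> ?thesis"
  obtain e :: "nat \<Rightarrow> nat" and b where e: "strict_mono e"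
    and hom: "\<And>i j. i < j \<Longrightarrow> le (x (e j)) (x (e i)) = b"
    using ramsey_pairs[where P = "\<lambda>i j. le (x j) (x i)"] by metis
  have po: "partial_order_on S le"
    using wpo by (simp add: wpo_on_def)
  have bad_e: "\<not> le (x (e i)) (x (e j))" if "i < j" for i j
    using bad strict_monoD[OF e that] by blast
  have distinct: "x (e i) \<noteq> x (e j)" if "i < j" for i j
    using bad_e[OF that] partial_order_on_refl[OF po x, of "e i"] by auto
  show False
  proof (cases b)
    case True
    have "(x \<circ> e) i \<in> S \<and> le ((x \<circ> e) (Suc i)) ((x \<circ> e) i) \<and> (x \<circ> e) (Suc i) \<noteq> (x \<circ> e) i" for i
      using x hom[of i "Suc i"] distinct[of i "Suc i"] True by auto
    then have "\<not> wfp_on S (\<lambda>a c. le a c \<and> a \<noteq> c)"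
      unfolding wfp_on_iff_no_infinite_down_chain not_not by (intro exI[of _ "x \<circ> e"]) blast
    then show False
      using wpo by (simp add: wpo_on_def)
  next
    case False
    have "\<not> le ((x \<circ> e) i) ((x \<circ> e) j)" if "i \<noteq> j" for i j
    proof (cases "i < j")
      case True
      then show ?thesis
        by (simp add: bad_e)
    next
      case False
      then show ?thesis
        using hom[of j i] \<open>\<not> b\<close> \<open>i \<noteq> j\<close> by simp
    qed
    then show False
      using infinite_antichain_on_range[OF po, of "x \<circ> e"] x wpo by (simp add: wpo_on_def)
  qed
qed

section \<open>Ideals\<close>

lemma IdlI:
  assumes "directed_on S le I" and "\<And>x y. x \<in> I \<Longrightarrow> y \<in> S \<Longrightarrow> le y x \<Longrightarrow> y \<in> I"
  shows "I \<in> Idl S le"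
  using assms by (simp add: Idl_def ideal_on_def)

lemma Idl_subset: "I \<in> Idl S le \<Longrightarrow> I \<subseteq> S"
  by (simp add: Idl_def ideal_on_def directed_on_def)

lemma Idl_nonempty: "I \<in> Idl S le \<Longrightarrow> I \<noteq> {}"
  by (simp add: Idl_def ideal_on_def directed_on_def)

lemma Idl_directed: "I \<in> Idl S le \<Longrightarrow> x \<in> I \<Longrightarrow> y \<in> I \<Longrightarrow> \<exists>z\<in>I. le x z \<and> le y z"
  by (simp add: Idl_def ideal_on_def directed_on_def)

lemma Idl_downward: "I \<in> Idl S le \<Longrightarrow> x \<in> I \<Longrightarrow> y \<in> S \<Longrightarrow> le y x \<Longrightarrow> y \<in> I"
  by (simp add: Idl_def ideal_on_def)

lemma partial_order_on_Idl: "partial_order_on (Idl S le) (\<subseteq>)"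
  unfolding partial_order_on_def by auto

definition down_closure :: "'a set \<Rightarrow> ('a \<Rightarrow> 'a \<Rightarrow> bool) \<Rightarrow> 'a set \<Rightarrow> 'a set" where
  "down_closure S le D = {y \<in> S. \<exists>x\<in>D. le y x}"

lemma down_closure_Idl:
  assumes po: "partial_order_on S le" and D: "directed_on S le D"
  shows "down_closure S le D \<in> Idl S le"
proof (rule IdlI)
  have DS: "D \<subseteq> S" and "D \<noteq> {}"
    using D by (auto simp: directed_on_def)
  then obtain d where "d \<in> D"
    by blast
  then have "d \<in> down_closure S le D"
    using DS partial_order_on_refl[OF po] by (auto simp: down_closure_def)
  then have "down_closure S le D \<noteq> {}"
    by blast
  moreover have "\<exists>z\<in>down_closure S le D. le x z \<and> le y z"
    if xy: "x \<in> down_closure S le D" "y \<in> down_closure S le D" for x y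
  proof -
    obtain a b where ab: "x \<in> S" "y \<in> S" "a \<in> D" "b \<in> D" "le x a" "le y b"
      using xy by (auto simp: down_closure_def)
    then obtain c where c: "c \<in> D" "le a c" "le b c"
      using D unfolding directed_on_def by blast
    have "c \<in> down_closure S le D"
      using c DS partial_order_on_refl[OF po] by (auto simp: down_closure_def)
    moreover have "le x c" "le y c"
      using ab c DS partial_order_on_trans[OF po] by blast+
    ultimately show ?thesis
      by blast
  qed
  moreover have "down_closure S le D \<subseteq> S"
    by (auto simp: down_closure_def)
  ultimately show "directed_on S le (down_closure S le D)"
    unfolding directed_on_def by blast
next
  fix x y
  assume "x \<in> down_closure S le D" and y: "y \<in> S" "le y x"
  then obtain a where "x \<in> S" "a \<in> D" "le x a"
    by (auto simp: down_closure_def)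
  moreover have "a \<in> S"
    using D \<open>a \<in> D\<close> by (auto simp: directed_on_def)
  ultimately show "y \<in> down_closure S le D"
    using y partial_order_on_trans[OF po, of y x a] by (auto simp: down_closure_def)
qed

lemma subset_down_closure: "partial_order_on S le \<Longrightarrow> D \<subseteq> S \<Longrightarrow> D \<subseteq> down_closure S le D"
  unfolding down_closure_def by (blast intro: partial_order_on_refl)

lemma down_closure_subset_Idl: "I \<in> Idl S le \<Longrightarrow> D \<subseteq> I \<Longrightarrow> down_closure S le D \<subseteq> I"
  by (auto simp: down_closure_def intro: Idl_downward)

lemma wfp_on_Idl:
  assumes wpo: "wpo_on S le"
  shows "wfp_on (Idl S le) (\<lambda>I J. I \<subseteq> J \<and> I \<noteq> J)"
  unfolding wfp_on_iff_no_infinite_down_chain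
proof
  assume "\<exists>D. \<forall>i. D i \<in> Idl S le \<and> D (Suc i) \<subseteq> D i \<and> D (Suc i) \<noteq> D i"
  then obtain D where D: "\<And>i. D i \<in> Idl S le" and desc: "\<And>i. D (Suc i) \<subseteq> D i \<and> D (Suc i) \<noteq> D i"
    by blast
  have "\<forall>i. \<exists>z. z \<in> D i \<and> z \<notin> D (Suc i)"
    using desc by blast
  then obtain x where x: "\<And>i. x i \<in> D i" "\<And>i. x i \<notin> D (Suc i)"
    by metis
  have antimono: "D j \<subseteq> D i" if "i \<le> j" for i j
    using lift_Suc_antimono_le[of D] desc that by blast
  have xS: "x i \<in> S" for i
    using x(1) Idl_subset[OF D] by blast
  obtain i j where "i < j" "le (x i) (x j)"
    using wpo_on_good[OF wpo xS] by blast
  moreover have "x j \<in> D (Suc i)"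
    using antimono[of "Suc i" j] x(1) \<open>i < j\<close> by auto
  ultimately have "x i \<in> D (Suc i)"
    using Idl_downward[OF D] xS by blast
  then show False
    using x(2) by blast
qed

section \<open>Antichains of ideals and Rado's structure\<close>

lemma rado_le_antisym: "p \<in> X_Rado \<Longrightarrow> q \<in> X_Rado \<Longrightarrow> rado_le p q \<Longrightarrow> rado_le q p \<Longrightarrow> p = q"
  by (cases p, cases q) (auto simp: rado_le_def X_Rado_def)

lemma infinite_antichain_Idl_if_contains_Rado:
  assumes po: "partial_order_on S le" and "contains_Rado S le"
  shows "\<exists>A. antichain_on (Idl S le) (\<subseteq>) A \<and> infinite A"
proof -
  obtain g where gS: "g ` X_Rado \<subseteq> S"
    and iso: "\<forall>p\<in>X_Rado. \<forall>q\<in>X_Rado. rado_le p q \<longleftrightarrow> le (g p) (g q)"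
    using assms(2) unfolding contains_Rado_def by (elim exE conjE)
  define column where "column m = (\<lambda>n. g (m, n)) ` {m<..}" for m
  define J where "J m = down_closure S le (column m)" for m
  have column_S: "column m \<subseteq> S" for m
    using gS by (auto simp: column_def X_Rado_def)
  have "directed_on S le (column m)" for m
    unfolding directed_on_def
  proof (intro conjI ballI)
    show "column m \<subseteq> S" "column m \<noteq> {}"
      using column_S by (auto simp: column_def)
    fix a b
    assume "a \<in> column m" "b \<in> column m"
    then obtain n n' where "m < n" "m < n'" "a = g (m, n)" "b = g (m, n')"
      by (auto simp: column_def)
    moreover have "rado_le (m, n) (m, max n n')" "rado_le (m, n') (m, max n n')"
      by (simp_all add: rado_le_def)
    ultimately show "\<exists>c\<in>column m. le a c \<and> le b c"
      using iso by (auto simp: column_def X_Rado_def less_max_iff_disj intro!: bexI[of _ "max n n'"])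
  qed
  then have J: "J m \<in> Idl S le" for m
    using down_closure_Idl[OF po] by (simp add: J_def)
  have incomparable: "\<not> J m \<subseteq> J m'" if "m \<noteq> m'" for m m'
  proof
    assume sub: "J m \<subseteq> J m'"
    define n where "n = Suc (max m m')"
    have "g (m, n) \<in> column m"
      by (auto simp: column_def n_def)
    then have "g (m, n) \<in> J m"
      using subset_down_closure[OF po column_S] by (auto simp: J_def)
    then obtain k where "m' < k" "le (g (m, n)) (g (m', k))"
      using sub by (auto simp: J_def down_closure_def column_def)
    then have "rado_le (m, n) (m', k)"
      using iso by (simp add: X_Rado_def n_def)
    then show False
      using that by (auto simp: rado_le_def n_def)
  qed
  then show ?thesis
    using infinite_antichain_on_range[OF partial_order_on_Idl, of J] J by blast
qed

lemma Idl_increasing_chain_above: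
  fixes c :: "nat \<Rightarrow> 'a"
  assumes po: "partial_order_on S le" and I: "I \<in> Idl S le" and c: "\<And>k. c k \<in> I"
  obtains h where "\<And>n. h n \<in> I" and "\<And>n n'. n \<le> n' \<Longrightarrow> le (h n) (h n')"
    and "\<And>k n. k \<le> n \<Longrightarrow> le (c k) (h n)"
proof -
  have "\<forall>a b. \<exists>u. a \<in> I \<longrightarrow> b \<in> I \<longrightarrow> u \<in> I \<and> le a u \<and> le b u"
    using Idl_directed[OF I] by blast
  then obtain ub where ub: "\<And>a b. a \<in> I \<Longrightarrow> b \<in> I \<Longrightarrow> ub a b \<in> I \<and> le a (ub a b) \<and> le b (ub a b)"
    by metis
  define h where "h = rec_nat (c 0) (\<lambda>n a. ub a (c (Suc n)))"
  have h_0: "h 0 = c 0" and h_Suc: "h (Suc n) = ub (h n) (c (Suc n))" for n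
    by (simp_all add: h_def)
  have hI: "h n \<in> I" for n
    by (induction n) (simp_all add: h_0 h_Suc c ub)
  have IS: "I \<subseteq> S"
    by (rule Idl_subset[OF I])
  have mono: "le (h n) (h n')" if "n \<le> n'" for n n'
    using that
  proof (induction n' rule: dec_induct)
    case base
    show ?case
      using partial_order_on_refl[OF po] hI IS by blast
  next
    case (step n')
    have "le (h n') (h (Suc n'))"
      using ub[OF hI c] by (simp add: h_Suc)
    then show ?case
      using step.IH partial_order_on_trans[OF po] hI IS by blast
  qed
  have "le (c k) (h k)" for k
  proof (cases k)
    case 0
    then show ?thesis
      using partial_order_on_refl[OF po] c IS by (auto simp: h_0)
  next
    case (Suc k')
    then show ?thesis
      using ub[OF hI c] by (simp add: h_Suc)
  qed
  then have "le (c k) (h n)" if "k \<le> n" for k n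
    using mono[OF that] partial_order_on_trans[OF po] hI c IS by blast
  with hI mono show thesis
    by (rule that)
qed

lemma Idl_separating_chains:
  fixes I :: "nat \<Rightarrow> 'a set"
  assumes po: "partial_order_on S le" and I: "\<And>m. I m \<in> Idl S le"
    and incomparable: "\<And>m k. m \<noteq> k \<Longrightarrow> \<not> I m \<subseteq> I k"
  obtains H where "\<And>m n. H m n \<in> I m"
    and "\<And>m n n'. n \<le> n' \<Longrightarrow> le (H m n) (H m n')"
    and "\<And>m n k. k \<le> n \<Longrightarrow> k \<noteq> m \<Longrightarrow> H m n \<notin> I k"
proof -
  have "\<exists>z. z \<in> I m \<and> (k \<noteq> m \<longrightarrow> z \<notin> I k)" for m k
  proof (cases "k = m")
    case True
    then show ?thesis
      using Idl_nonempty[OF I] by blast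
  next
    case False
    then show ?thesis
      using incomparable[of m k] by blast
  qed
  then obtain a where a: "\<And>m k. a m k \<in> I m" and a_out: "\<And>m k. k \<noteq> m \<Longrightarrow> a m k \<notin> I k"
    by metis
  have "\<forall>m. \<exists>h :: nat \<Rightarrow> 'a. (\<forall>n. h n \<in> I m) \<and> (\<forall>n n'. n \<le> n' \<longrightarrow> le (h n) (h n'))
      \<and> (\<forall>k n. k \<le> n \<longrightarrow> le (a m k) (h n))"
    by (metis Idl_increasing_chain_above[where c = "a m" for m, OF po I a])
  then obtain H :: "nat \<Rightarrow> nat \<Rightarrow> 'a" where H: "\<forall>m. (\<forall>n. H m n \<in> I m)
      \<and> (\<forall>n n'. n \<le> n' \<longrightarrow> le (H m n) (H m n')) \<and> (\<forall>k n. k \<le> n \<longrightarrow> le (a m k) (H m n))"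
    by (rule choice[THEN exE])
  show thesis
  proof (rule that[of H])
    show "H m n \<in> I m" "n \<le> n' \<Longrightarrow> le (H m n) (H m n')" for m n n'
      using H by simp_all
    show "H m n \<notin> I k" if "k \<le> n" "k \<noteq> m" for m n k
    proof
      assume "H m n \<in> I k"
      moreover have "le (a m k) (H m n)"
        using H that(1) by simp
      ultimately have "a m k \<in> I k"
        using Idl_downward[OF I] a Idl_subset[OF I] by blast
      then show False
        using a_out[OF that(2)] by blast
    qed
  qed
qed

lemma contains_RadoI:
  assumes po: "partial_order_on S le" and g: "g ` X_Rado \<subseteq> S"
    and iso: "\<And>p q. p \<in> X_Rado \<Longrightarrow> q \<in> X_Rado \<Longrightarrow> rado_le p q \<longleftrightarrow> le (g p) (g q)"
  shows "contains_Rado S le"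
proof -
  have "inj_on g X_Rado"
  proof (rule inj_onI)
    fix p q
    assume pq: "p \<in> X_Rado" "q \<in> X_Rado" "g p = g q"
    then have "le (g p) (g q)" "le (g q) (g p)"
      using partial_order_on_refl[OF po] g by auto
    then show "p = q"
      using iso pq(1,2) rado_le_antisym by blast
  qed
  then show ?thesis
    unfolding contains_Rado_def using g iso by blast
qed

lemma contains_Rado_if_columns:
  fixes g :: "nat \<times> nat \<Rightarrow> 'a"
  assumes po: "partial_order_on S le"
    and g: "\<And>m n. m < n \<Longrightarrow> g (m, n) \<in> S"
    and mono: "\<And>m n n'. m < n \<Longrightarrow> n \<le> n' \<Longrightarrow> le (g (m, n)) (g (m, n'))"
    and above: "\<And>m n m' n'. m < n \<Longrightarrow> n < m' \<Longrightarrow> m' < n' \<Longrightarrow> le (g (m, n)) (g (m', n'))"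
    and incomparable: "\<And>m n m' n'. m < n \<Longrightarrow> m' < n' \<Longrightarrow> m' \<le> n \<Longrightarrow> m \<noteq> m'
      \<Longrightarrow> \<not> le (g (m, n)) (g (m', n'))"
  shows "contains_Rado S le"
proof -
  have iso: "rado_le (m, n) (m', n') \<longleftrightarrow> le (g (m, n)) (g (m', n'))"
    if mn: "m < n" "m' < n'" for m n m' n'
  proof
    assume "rado_le (m, n) (m', n')"
    then show "le (g (m, n)) (g (m', n'))"
      using mono above mn by (auto simp: rado_le_def)
  next
    assume le: "le (g (m, n)) (g (m', n'))"
    show "rado_le (m, n) (m', n')"
    proof (rule ccontr)
      assume "\<not> rado_le (m, n) (m', n')"
      then have "m' \<le> n" and "m \<noteq> m' \<or> n' < n"
        by (auto simp: rado_le_def)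
      then consider "m \<noteq> m'" | "m = m'" "n' < n"
        by blast
      then show False
      proof cases
        case 1
        then show False
          using incomparable[OF mn \<open>m' \<le> n\<close>] le by blast
      next
        case 2
        \<comment> \<open>g(n, Suc n) lies above g(m, n') since n' < n, but not above g(m, n)\<close>
        have "le (g (m', n')) (g (n, Suc n))"
          using above[of m' n' n "Suc n"] mn 2 by simp
        then have "le (g (m, n)) (g (n, Suc n))"
          using le partial_order_on_trans[OF po] g mn by blast
        then show False
          using incomparable[of m n n "Suc n"] mn by simp
      qed
    qed
  qed
  show ?thesis
  proof (rule contains_RadoI[OF po])
    show "g ` X_Rado \<subseteq> S"
      using g by (auto simp: X_Rado_def)
    show "rado_le p q \<longleftrightarrow> le (g p) (g q)" if "p \<in> X_Rado" "q \<in> X_Rado" for p q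
      using iso that by (cases p, cases q) (simp add: X_Rado_def)
  qed
qed

lemma contains_Rado_if_infinite_antichain_Idl:
  assumes wpo: "wpo_on S le" and A: "antichain_on (Idl S le) (\<subseteq>) A" "infinite A"
  shows "contains_Rado S le"
proof -
  have po: "partial_order_on S le"
    using wpo by (simp add: wpo_on_def)
  obtain I :: "nat \<Rightarrow> 'a set" where "inj I" and IA: "\<And>m. I m \<in> A"
    using infinite_countable_subset[OF A(2)] by blast
  have I: "I m \<in> Idl S le" for m
    using IA A(1) by (auto simp: antichain_on_def)
  have incomparable: "\<not> I m \<subseteq> I k" if "m \<noteq> k" for m k
  proof -
    have "I m \<noteq> I k"
      using \<open>inj I\<close> that by (simp add: inj_eq)
    then show ?thesis
      using A(1) IA[of m] IA[of k] unfolding antichain_on_def by blast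
  qed
  obtain H :: "nat \<Rightarrow> nat \<Rightarrow> 'a" where H: "\<And>m n. H m n \<in> I m"
    and mono: "\<And>m n n'. n \<le> n' \<Longrightarrow> le (H m n) (H m n')"
    and out: "\<And>m n k. k \<le> n \<Longrightarrow> k \<noteq> m \<Longrightarrow> H m n \<notin> I k"
    using Idl_separating_chains[where I = I, OF po I incomparable] by blast
  have HS: "H m n \<in> S" for m n
    using H Idl_subset[OF I] by blast
  obtain e :: "nat \<Rightarrow> nat" and b where e: "strict_mono e"
    and hom: "\<And>i j k l. i < j \<Longrightarrow> j < k \<Longrightarrow> k < l \<Longrightarrow> le (H (e i) (e j)) (H (e k) (e l)) = b"
    using ramsey_quadruples[where Q = "\<lambda>i j k l. le (H i j) (H k l)"] by metis
  \<comment> \<open>colour False would make the diagonal sequence below bad\<close>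
  have b
  proof -
    obtain n m where "n < m" "le (H (e (2 * n)) (e (2 * n + 1))) (H (e (2 * m)) (e (2 * m + 1)))"
      using wpo_on_good[OF wpo, of "\<lambda>n. H (e (2 * n)) (e (2 * n + 1))"] HS by blast
    then show b
      using hom[of "2 * n" "2 * n + 1" "2 * m" "2 * m + 1"] by simp
  qed
  let ?g = "\<lambda>p. H (e (fst p)) (e (snd p))"
  show ?thesis
  proof (rule contains_Rado_if_columns[OF po, of ?g])
    show "?g (m, n) \<in> S" for m n
      by (simp add: HS)
    show "le (?g (m, n)) (?g (m, n'))" if "n \<le> n'" for m n n'
      using mono strict_mono_less_eq[OF e] that by simp
    show "le (?g (m, n)) (?g (m', n'))" if "m < n" "n < m'" "m' < n'" for m n m' n'
      using hom[OF that] \<open>b\<close> by simp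
    show "\<not> le (?g (m, n)) (?g (m', n'))" if "m' \<le> n" "m \<noteq> m'" for m n m' n'
    proof
      assume "le (?g (m, n)) (?g (m', n'))"
      then have "H (e m) (e n) \<in> I (e m')"
        using Idl_downward[OF I H] HS by simp
      moreover have "e m' \<le> e n" "e m' \<noteq> e m"
        using that strict_mono_less_eq[OF e] strict_mono_eq[OF e] by auto
      ultimately show False
        using out by blast
    qed
  qed
qed

lemma wpo_on_Idl_iff:
  assumes wpo: "wpo_on S le"
  shows "wpo_on (Idl S le) (\<subseteq>) \<longleftrightarrow> \<not> contains_Rado S le"
proof
  assume "wpo_on (Idl S le) (\<subseteq>)"
  then show "\<not> contains_Rado S le"
    using infinite_antichain_Idl_if_contains_Rado wpo by (auto simp: wpo_on_def)
next
  assume "\<not> contains_Rado S le"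
  then have "finite A" if "antichain_on (Idl S le) (\<subseteq>) A" for A
    using contains_Rado_if_infinite_antichain_Idl[OF wpo that] by blast
  then show "wpo_on (Idl S le) (\<subseteq>)"
    using partial_order_on_Idl wfp_on_Idl[OF wpo] by (simp add: wpo_on_def)
qed

section \<open>The ideal completion as a continuous dcpo\<close>

lemma Union_directed_Idl:
  assumes D: "directed_on (Idl S le) (\<subseteq>) D"
  shows "\<Union>D \<in> Idl S le"
proof (rule IdlI)
  have DI: "D \<subseteq> Idl S le" and "D \<noteq> {}"
    and updir: "\<And>I J. I \<in> D \<Longrightarrow> J \<in> D \<Longrightarrow> \<exists>K\<in>D. I \<subseteq> K \<and> J \<subseteq> K"
    using D by (auto simp: directed_on_def)
  have "\<Union>D \<subseteq> S"
    using DI Idl_subset by blast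
  moreover have "\<Union>D \<noteq> {}"
    using \<open>D \<noteq> {}\<close> DI Idl_nonempty by blast
  moreover have "\<exists>z\<in>\<Union>D. le x z \<and> le y z" if xy: "x \<in> \<Union>D" "y \<in> \<Union>D" for x y
  proof -
    obtain I J where "I \<in> D" "J \<in> D" "x \<in> I" "y \<in> J"
      using xy by blast
    then obtain K where K: "K \<in> D" "x \<in> K" "y \<in> K"
      using updir by blast
    then have "K \<in> Idl S le"
      using DI by blast
    then obtain z where "z \<in> K" "le x z" "le y z"
      using Idl_directed K(2,3) by meson
    then show ?thesis
      using K(1) by blast
  qed
  ultimately show "directed_on S le (\<Union>D)"
    by (simp add: directed_on_def)
  show "y \<in> \<Union>D" if x: "x \<in> \<Union>D" and y: "y \<in> S" "le y x" for x y
  proof -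
    obtain I where I: "I \<in> D" "x \<in> I"
      using x by blast
    then have "I \<in> Idl S le"
      using DI by blast
    then show ?thesis
      using Idl_downward[of I S le x y] I y by blast
  qed
qed

lemma is_lub_Idl_iff:
  assumes D: "directed_on (Idl S le) (\<subseteq>) D"
  shows "is_lub (Idl S le) (\<subseteq>) D d \<longleftrightarrow> d = \<Union>D"
proof
  assume lub: "is_lub (Idl S le) (\<subseteq>) D d"
  then have "d \<subseteq> \<Union>D"
    using Union_directed_Idl[OF D] Union_upper unfolding is_lub_def by metis
  moreover have "\<Union>D \<subseteq> d"
    using lub unfolding is_lub_def by (simp add: Union_least)
  ultimately show "d = \<Union>D"
    by (rule subset_antisym)
next
  assume "d = \<Union>D"
  then show "is_lub (Idl S le) (\<subseteq>) D d"
    using Union_directed_Idl[OF D] unfolding is_lub_def by auto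
qed

lemma dcpo_on_Idl: "dcpo_on (Idl S le) (\<subseteq>)"
  unfolding dcpo_on_def
proof (intro conjI allI impI partial_order_on_Idl)
  fix D
  assume "directed_on (Idl S le) (\<subseteq>) D"
  then show "\<exists>d. is_lub (Idl S le) (\<subseteq>) D d"
    using is_lub_Idl_iff by blast
qed

lemma way_below_principal_Idl:
  assumes "a \<in> I"
  shows "way_below (Idl S le) (\<subseteq>) (down_closure S le {a}) I"
  unfolding way_below_def
proof (intro allI impI)
  fix D d
  assume D: "directed_on (Idl S le) (\<subseteq>) D \<and> is_lub (Idl S le) (\<subseteq>) D d \<and> I \<subseteq> d"
  then have "a \<in> \<Union>D"
    using assms is_lub_Idl_iff by blast
  then obtain J where J: "J \<in> D" "a \<in> J"
    by blast
  then have "J \<in> Idl S le"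
    using D by (auto simp: directed_on_def)
  then have "down_closure S le {a} \<subseteq> J"
    using J(2) by (simp add: down_closure_subset_Idl)
  then show "\<exists>J\<in>D. down_closure S le {a} \<subseteq> J"
    using J(1) by blast
qed

lemma principal_Idl:
  assumes po: "partial_order_on S le" and "a \<in> S"
  shows "down_closure S le {a} \<in> Idl S le"
proof -
  have "directed_on S le {a}"
    using assms partial_order_on_refl[OF po] by (simp add: directed_on_def)
  then show ?thesis
    by (rule down_closure_Idl[OF po])
qed

lemma down_closure_singleton_mono:
  assumes po: "partial_order_on S le" and "a \<in> S" "c \<in> S" "le a c"
  shows "down_closure S le {a} \<subseteq> down_closure S le {c}"
  using partial_order_on_trans[OF po _ assms(2,3) _ assms(4)] by (auto simp: down_closure_def)

lemma directed_principal_Idls: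
  assumes po: "partial_order_on S le" and I: "I \<in> Idl S le"
  shows "directed_on (Idl S le) (\<subseteq>) ((\<lambda>a. down_closure S le {a}) ` I)"
  unfolding directed_on_def
proof (intro conjI ballI)
  have IS: "I \<subseteq> S"
    by (rule Idl_subset[OF I])
  then show "(\<lambda>a. down_closure S le {a}) ` I \<subseteq> Idl S le"
    using principal_Idl[OF po] by auto
  show "(\<lambda>a. down_closure S le {a}) ` I \<noteq> {}"
    using Idl_nonempty[OF I] by simp
  fix p q
  assume "p \<in> (\<lambda>a. down_closure S le {a}) ` I" "q \<in> (\<lambda>a. down_closure S le {a}) ` I"
  then obtain a b where ab: "a \<in> I" "b \<in> I" "p = down_closure S le {a}" "q = down_closure S le {b}"
    by blast
  obtain c where c: "c \<in> I" "le a c" "le b c"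
    using Idl_directed[OF I ab(1,2)] by blast
  have "p \<subseteq> down_closure S le {c}" "q \<subseteq> down_closure S le {c}"
    using ab c IS down_closure_singleton_mono[OF po, of a c] down_closure_singleton_mono[OF po, of b c]
    by auto
  then show "\<exists>r\<in>(\<lambda>a. down_closure S le {a}) ` I. p \<subseteq> r \<and> q \<subseteq> r"
    using c(1) by blast
qed

lemma Union_principal_Idls:
  assumes po: "partial_order_on S le" and I: "I \<in> Idl S le"
  shows "\<Union>((\<lambda>a. down_closure S le {a}) ` I) = I"
proof
  have "down_closure S le {a} \<subseteq> I" if "a \<in> I" for a
    using down_closure_subset_Idl[OF I] that by simp
  then show "\<Union>((\<lambda>a. down_closure S le {a}) ` I) \<subseteq> I"
    by blast
  have "a \<in> down_closure S le {a}" if "a \<in> I" for a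
    using subset_down_closure[OF po, of "{a}"] Idl_subset[OF I] that by blast
  then show "I \<subseteq> \<Union>((\<lambda>a. down_closure S le {a}) ` I)"
    by blast
qed

lemma way_below_Idl_imp_principal:
  assumes po: "partial_order_on S le" and I: "I \<in> Idl S le"
    and way_below: "way_below (Idl S le) (\<subseteq>) J I"
  shows "\<exists>a\<in>I. J \<subseteq> down_closure S le {a}"
proof -
  let ?P = "(\<lambda>a. down_closure S le {a}) ` I"
  have directed: "directed_on (Idl S le) (\<subseteq>) ?P"
    by (rule directed_principal_Idls[OF po I])
  moreover have "is_lub (Idl S le) (\<subseteq>) ?P I"
    using is_lub_Idl_iff[OF directed] Union_principal_Idls[OF po I] by simp
  ultimately have "\<exists>r\<in>?P. J \<subseteq> r"
    using way_below[unfolded way_below_def, rule_format, of ?P I] by simp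
  then show ?thesis
    by blast
qed

lemma directed_way_below_Idl:
  assumes po: "partial_order_on S le" and I: "I \<in> Idl S le"
  shows "directed_on (Idl S le) (\<subseteq>) {J \<in> Idl S le. way_below (Idl S le) (\<subseteq>) J I}"
    (is "directed_on _ _ ?W")
  unfolding directed_on_def
proof (intro conjI ballI)
  have IS: "I \<subseteq> S"
    by (rule Idl_subset[OF I])
  have principal_W: "down_closure S le {a} \<in> ?W" if "a \<in> I" for a
    using principal_Idl[OF po, of a] way_below_principal_Idl[OF that] that IS by blast
  show "?W \<subseteq> Idl S le"
    by blast
  show "?W \<noteq> {}"
    using principal_W Idl_nonempty[OF I] by blast
  fix J K
  assume "J \<in> ?W" "K \<in> ?W"
  then have "way_below (Idl S le) (\<subseteq>) J I" "way_below (Idl S le) (\<subseteq>) K I"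
    by simp_all
  then obtain a b where ab: "a \<in> I" "b \<in> I" "J \<subseteq> down_closure S le {a}" "K \<subseteq> down_closure S le {b}"
    using way_below_Idl_imp_principal[OF po I] by meson
  obtain c where c: "c \<in> I" "le a c" "le b c"
    using Idl_directed[OF I ab(1,2)] by blast
  have "J \<subseteq> down_closure S le {c}" "K \<subseteq> down_closure S le {c}"
    using ab c IS down_closure_singleton_mono[OF po, of a c] down_closure_singleton_mono[OF po, of b c]
    by auto
  then show "\<exists>L\<in>?W. J \<subseteq> L \<and> K \<subseteq> L"
    using principal_W[OF c(1)] by blast
qed

lemma continuous_dcpo_on_Idl:
  assumes po: "partial_order_on S le"
  shows "continuous_dcpo_on (Idl S le) (\<subseteq>)"
  unfolding continuous_dcpo_on_def
proof (intro conjI ballI dcpo_on_Idl directed_way_below_Idl[OF po])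
  fix I
  assume I: "I \<in> Idl S le"
  let ?W = "{J \<in> Idl S le. way_below (Idl S le) (\<subseteq>) J I}"
  have "J \<subseteq> I" if J: "J \<in> ?W" for J
  proof -
    obtain a where "a \<in> I" "J \<subseteq> down_closure S le {a}"
      using way_below_Idl_imp_principal[OF po I] J by blast
    then show ?thesis
      using down_closure_subset_Idl[OF I, of "{a}"] by blast
  qed
  moreover have "I \<subseteq> K" if "\<forall>J\<in>?W. J \<subseteq> K" for K
  proof
    fix a
    assume a: "a \<in> I"
    then have "a \<in> down_closure S le {a}"
      using Idl_subset[OF I] subset_down_closure[OF po, of "{a}"] by blast
    moreover have "down_closure S le {a} \<in> ?W"
      using principal_Idl[OF po, of a] way_below_principal_Idl[OF a] a Idl_subset[OF I] by blast
    ultimately show "a \<in> K"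
      using that by blast
  qed
  ultimately show "is_lub (Idl S le) (\<subseteq>) ?W I"
    unfolding is_lub_def using I by blast
qed

section \<open>Completed transition maps\<close>

locale partial_monotone_map =
  fixes S :: "'a set" and le :: "'a \<Rightarrow> 'a \<Rightarrow> bool" and f :: "'a \<Rightarrow> 'a option"
  assumes partial_order: "partial_order_on S le"
    and maps_into: "\<And>x. x \<in> pdom S f \<Longrightarrow> the (f x) \<in> S"
    and pdom_upward: "\<And>x y. x \<in> pdom S f \<Longrightarrow> y \<in> S \<Longrightarrow> le x y \<Longrightarrow> y \<in> pdom S f"
    and monotone: "\<And>x y. x \<in> pdom S f \<Longrightarrow> y \<in> pdom S f \<Longrightarrow> le x y \<Longrightarrow> le (the (f x)) (the (f y))"
begin

lemma pdom_hat_map: "pdom (Idl S le) (hat_map S le f) = {C \<in> Idl S le. C \<inter> pdom S f \<noteq> {}}"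
  unfolding pdom_def hat_map_def by auto

lemma the_hat_map:
  "C \<in> Idl S le \<Longrightarrow> C \<inter> pdom S f \<noteq> {} \<Longrightarrow>
    the (hat_map S le f C) = down_closure S le ((\<lambda>x. the (f x)) ` (C \<inter> pdom S f))"
  unfolding hat_map_def down_closure_def by auto

lemma hat_map_Idl:
  assumes C: "C \<in> Idl S le" and dom: "C \<inter> pdom S f \<noteq> {}"
  shows "the (hat_map S le f C) \<in> Idl S le"
proof -
  have "directed_on S le ((\<lambda>x. the (f x)) ` (C \<inter> pdom S f))"
    unfolding directed_on_def
  proof (intro conjI ballI)
    show "(\<lambda>x. the (f x)) ` (C \<inter> pdom S f) \<subseteq> S"
      using maps_into by blast
    show "(\<lambda>x. the (f x)) ` (C \<inter> pdom S f) \<noteq> {}"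
      using dom by blast
    fix p q
    assume "p \<in> (\<lambda>x. the (f x)) ` (C \<inter> pdom S f)" "q \<in> (\<lambda>x. the (f x)) ` (C \<inter> pdom S f)"
    then obtain x y where xy: "x \<in> C" "y \<in> C" "x \<in> pdom S f" "y \<in> pdom S f"
      "p = the (f x)" "q = the (f y)"
      by blast
    obtain z where z: "z \<in> C" "le x z" "le y z"
      using Idl_directed[OF C xy(1,2)] by blast
    then have "z \<in> pdom S f"
      using pdom_upward xy(3) Idl_subset[OF C] by blast
    then show "\<exists>r\<in>(\<lambda>x. the (f x)) ` (C \<inter> pdom S f). le p r \<and> le q r"
      using z xy monotone by blast
  qed
  then show ?thesis
    using the_hat_map[OF C dom] down_closure_Idl[OF partial_order] by simp
qed

lemma hat_map_mono:
  "C \<in> Idl S le \<Longrightarrow> C' \<in> Idl S le \<Longrightarrow> C \<inter> pdom S f \<noteq> {} \<Longrightarrow> C \<subseteq> C' \<Longrightarrow>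
    the (hat_map S le f C) \<subseteq> the (hat_map S le f C')"
  unfolding hat_map_def by auto

lemma partial_continuous_on_hat_map: "partial_continuous_on (Idl S le) (\<subseteq>) (hat_map S le f)"
  unfolding partial_continuous_on_def
proof (intro conjI allI impI)
  show "scott_open_on (Idl S le) (\<subseteq>) (pdom (Idl S le) (hat_map S le f))"
    unfolding scott_open_on_def pdom_hat_map
  proof (intro conjI allI impI ballI)
    fix D d
    assume D: "directed_on (Idl S le) (\<subseteq>) D \<and> is_lub (Idl S le) (\<subseteq>) D d
      \<and> d \<in> {C \<in> Idl S le. C \<inter> pdom S f \<noteq> {}}"
    then have "\<Union>D \<inter> pdom S f \<noteq> {}"
      using is_lub_Idl_iff by blast
    then obtain C where "C \<in> D" "C \<inter> pdom S f \<noteq> {}"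
      by blast
    moreover have "C \<in> Idl S le"
      using D \<open>C \<in> D\<close> by (auto simp: directed_on_def)
    ultimately show "D \<inter> {C \<in> Idl S le. C \<inter> pdom S f \<noteq> {}} \<noteq> {}"
      by blast
  qed blast+
next
  fix D d
  assume asm: "directed_on (Idl S le) (\<subseteq>) D \<and> D \<subseteq> pdom (Idl S le) (hat_map S le f)
    \<and> is_lub (Idl S le) (\<subseteq>) D d"
  then have D: "directed_on (Idl S le) (\<subseteq>) D"
    by blast
  then have DI: "D \<subseteq> Idl S le" and "D \<noteq> {}"
    by (auto simp: directed_on_def)
  have Ddom: "C \<inter> pdom S f \<noteq> {}" if "C \<in> D" for C
    using asm that by (auto simp: pdom_hat_map)
  have d: "d = \<Union>D"
    using asm is_lub_Idl_iff[OF D] by blast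
  then have dI: "d \<in> Idl S le"
    using Union_directed_Idl[OF D] by simp
  have ddom: "d \<inter> pdom S f \<noteq> {}"
    using d \<open>D \<noteq> {}\<close> Ddom by blast
  have hat_C: "the (hat_map S le f C) = down_closure S le ((\<lambda>x. the (f x)) ` (C \<inter> pdom S f))"
    if "C \<in> D" for C
    using that DI by (intro the_hat_map Ddom) auto
  have "the (hat_map S le f d) = down_closure S le ((\<lambda>x. the (f x)) ` (\<Union>D \<inter> pdom S f))"
    using the_hat_map[OF dI ddom] d by simp
  also have "\<dots> = (\<Union>C\<in>D. the (hat_map S le f C))"
    by (auto simp: hat_C down_closure_def)
  finally have "the (hat_map S le f d) = (\<Union>C\<in>D. the (hat_map S le f C))" .
  then show "is_lub (Idl S le) (\<subseteq>) ((\<lambda>C. the (hat_map S le f C)) ` D) (the (hat_map S le f d))"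
    unfolding is_lub_def using hat_map_Idl[OF dI ddom] by blast
qed

end

lemma partial_monotone_map_if_functional_WSTS:
  assumes "functional_WSTS S le F" and "f \<in> F"
  shows "partial_monotone_map S le f"
proof
  show "partial_order_on S le"
    using assms(1) by (simp add: functional_WSTS_def wpo_on_def)
  have f_props: "(\<forall>x\<in>pdom S f. the (f x) \<in> S) \<and> (\<forall>x\<in>pdom S f. \<forall>y\<in>S. le x y \<longrightarrow> y \<in> pdom S f)
    \<and> (\<forall>x\<in>pdom S f. \<forall>y\<in>pdom S f. le x y \<longrightarrow> le (the (f x)) (the (f y)))"
    using assms unfolding functional_WSTS_def by blast
  then show "the (f x) \<in> S" if "x \<in> pdom S f" for x
    using that by blast
  show "y \<in> pdom S f" if "x \<in> pdom S f" "y \<in> S" "le x y" for x y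
    using that f_props by blast
  show "le (the (f x)) (the (f y))" if "x \<in> pdom S f" "y \<in> pdom S f" "le x y" for x y
    using that f_props by blast
qed

lemma complete_functional_WSTS_completion:
  assumes WSTS: "functional_WSTS S le F" and wpo_Idl: "wpo_on (Idl S le) (\<subseteq>)"
  shows "complete_functional_WSTS (Idl S le) (\<subseteq>) (completion_maps S le F)"
proof -
  have "finite (completion_maps S le F)"
    using WSTS by (simp add: functional_WSTS_def completion_maps_def)
  moreover have "\<forall>h\<in>completion_maps S le F. (\<forall>C\<in>pdom (Idl S le) h. the (h C) \<in> Idl S le)
      \<and> (\<forall>C\<in>pdom (Idl S le) h. \<forall>C'\<in>Idl S le. C \<subseteq> C' \<longrightarrow> C' \<in> pdom (Idl S le) h)
      \<and> (\<forall>C\<in>pdom (Idl S le) h. \<forall>C'\<in>pdom (Idl S le) h. C \<subseteq> C' \<longrightarrow> the (h C) \<subseteq> the (h C'))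
      \<and> partial_continuous_on (Idl S le) (\<subseteq>) h" (is "\<forall>h\<in>_. ?completion_map h")
  proof
    fix h
    assume h_in: "h \<in> completion_maps S le F"
    obtain f where f: "f \<in> F" and h: "h = hat_map S le f"
      using h_in by (auto simp: completion_maps_def)
    interpret partial_monotone_map S le f
      by (rule partial_monotone_map_if_functional_WSTS[OF WSTS f])
    show "?completion_map h"
      unfolding h pdom_hat_map using hat_map_Idl hat_map_mono partial_continuous_on_hat_map by blast
  qed
  moreover have "continuous_dcpo_on (Idl S le) (\<subseteq>)"
    using WSTS by (simp add: functional_WSTS_def wpo_on_def continuous_dcpo_on_Idl)
  ultimately show ?thesis
    unfolding complete_functional_WSTS_def functional_WSTS_def using wpo_Idl by (simp add: ball_conj_distrib)
qed

theorem theorem4p4: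
  fixes S :: "'a set" and le :: "'a \<Rightarrow> 'a \<Rightarrow> bool" and F :: "('a \<Rightarrow> 'a option) set"
  assumes "functional_WSTS S le F"
  shows "complete_functional_WSTS (Idl S le) (\<subseteq>) (completion_maps S le F) \<longleftrightarrow> omega2_wqo S le"
proof -
  have wpo: "wpo_on S le"
    using assms by (simp add: functional_WSTS_def)
  show ?thesis
  proof
    assume "complete_functional_WSTS (Idl S le) (\<subseteq>) (completion_maps S le F)"
    then have "wpo_on (Idl S le) (\<subseteq>)"
      by (simp add: complete_functional_WSTS_def functional_WSTS_def)
    then show "omega2_wqo S le"
      using wpo_on_Idl_iff[OF wpo] wpo by (simp add: omega2_wqo_def)
  next
    assume "omega2_wqo S le"
    then have "wpo_on (Idl S le) (\<subseteq>)"
      using wpo_on_Idl_iff[OF wpo] by (simp add: omega2_wqo_def)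
    then show "complete_functional_WSTS (Idl S le) (\<subseteq>) (completion_maps S le F)"
      by (rule complete_functional_WSTS_completion[OF assms])
  qed
qed

end
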